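(* Let $d\ge 1$ and $n\ge 1$ be integers, and let $g\in\mathbb{R}[x_1,\dots,x_d]$ be a form (homogeneous polynomial) of degree $2n$ such that $g(\mathbf{x})\ge 0$ for all $\mathbf{x}\in\mathbb{R}^d$ and $g(\mathbf{x})=0$ only if $\mathbf{x}=0$. Let $\mu$ be the measure on $\mathbb{R}^d$ with $d\mu(\mathbf{x})=\exp(-g(\mathbf{x}))\,d\mathbf{x}$, and let $c_{2n}:=1+\frac{d}{2n}$. Let $\{P_{\boldsymbol{\alpha}}:\boldsymbol{\alpha}\in\mathbb{N}^d_{2n}\}$ be any basis of the space $\mathcal{H}[\mathbf{x}]_{2n}$ of degree-$2n$ forms which is orthonormal with respect to $\mu$, i.e. $\int P_{\boldsymbol{\alpha}}P_{\boldsymbol{\beta}}\,d\mu=\delta_{\boldsymbol{\alpha}\boldsymbol{\beta}}$ for all $\boldsymbol{\alpha},\boldsymbol{\beta}\in\mathbb{N}^d_{2n}$. Set $\mathbb{P}_{2n}(\mathbf{x}):=(P_{\boldsymbol{\alpha}}(\mathbf{x}))_{\boldsymbol{\alpha}\in\mathbb{N}^d_{2n}}$, let $\tilde{\mathbf{g}}$ be the coefficient vector of $g$ in this basis (so $g(\mathbf{x})=\langle\tilde{\mathbf{g}},\mathbb{P}_{2n}(\mathbf{x})\rangle$), let $\tilde{\boldsymbol{\mu}}^{(2n)}:=\int\mathbb{P}_{2n}(\mathbf{x})\,d\mu(\mathbf{x})$, and let $K^\mu_{2n}(\mathbf{x},\mathbf{y}):=\sum_{\boldsymbol{\alpha}\in\mathbb{N}^d_{2n}}P_{\boldsymbol{\alpha}}(\mathbf{x})P_{\boldsymbol{\alpha}}(\mathbf{y})$.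 Then \[\tilde{\mathbf{g}}=c_{2n}\,\tilde{\boldsymbol{\mu}}^{(2n)}=c_{2n}\int_{\mathbb{R}^d}\mathbb{P}_{2n}(\mathbf{x})\,\exp(-\langle\mathbb{P}_{2n}(\mathbf{x}),\tilde{\mathbf{g}}\rangle)\,d\mathbf{x},\] \[g(\mathbf{x})=c_{2n}\,\langle\mathbb{P}_{2n}(\mathbf{x}),\tilde{\boldsymbol{\mu}}^{(2n)}\rangle=c_{2n}\int K^\mu_{2n}(\mathbf{x},\mathbf{y})\,d\mu(\mathbf{y})\quad\text{for all }\mathbf{x}\in\mathbb{R}^d,\] \[\tilde{\boldsymbol{\mu}}^{(2n)}=\int_{\mathbb{R}^d}\mathbb{P}_{2n}(\mathbf{x})\,\exp\big(-c_{2n}\,\langle\mathbb{P}_{2n}(\mathbf{x}),\tilde{\boldsymbol{\mu}}^{(2n)}\rangle\big)\,d\mathbf{x}.\]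
   Context: $\mathbb{N}^d_{2n}=\{\boldsymbol{\alpha}\in\mathbb{N}^d:\sum_i\alpha_i=2n\}$. $\mathcal{H}[\mathbf{x}]_{2n}$ denotes the real vector space of homogeneous polynomials of degree $2n$ in $\mathbf{x}=(x_1,\dots,x_d)$, of dimension $\binom{d-1+2n}{2n}$. The degree-$2n$ moment matrix $\int \mathbf{v}_{2n}\mathbf{v}_{2n}^T d\mu$ (with $\mathbf{v}_{2n}(\mathbf{x})=(\mathbf{x}^{\boldsymbol{\alpha}})_{\boldsymbol{\alpha}\in\mathbb{N}^d_{2n}}$) is positive definite, so a $\mu$-orthonormal basis of $\mathcal{H}[\mathbf{x}]_{2n}$ exists. *)

theory Defs
  imports "HOL-Analysis.Analysis"
begin

text \<open>Multi-indices alpha in N^d with |alpha| = m; the dimension d is the finite index type 'd.\<close>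
definition multi_idx :: "nat \<Rightarrow> ('d::finite \<Rightarrow> nat) set" where
  "multi_idx m = {\<alpha>. (\<Sum>i\<in>UNIV. \<alpha> i) = m}"

definition monom :: "('d::finite \<Rightarrow> nat) \<Rightarrow> real^'d \<Rightarrow> real" where
  "monom \<alpha> x = (\<Prod>i\<in>UNIV. (x $ i) ^ (\<alpha> i))"

definition hom_form :: "nat \<Rightarrow> (real^'d::finite \<Rightarrow> real) \<Rightarrow> bool" where
  "hom_form m f \<longleftrightarrow>
     (\<exists>c. \<forall>x. f x = (\<Sum>\<alpha>\<in>(multi_idx m :: ('d \<Rightarrow> nat) set). c \<alpha> * monom \<alpha> x))"

end

(*
  The key fact is an integrated Euler identity: if f is k-homogeneous and g is m-homogeneous
  and positive off the origin, then
    integral f * g * exp (- g) = (k + d) / m * integral f * exp (- g).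
  For f = P_alpha and k = m = 2n the left-hand side is the alpha-th coefficient of g (by
  orthonormality) and the right-hand side is c_2n times the mu-integral of P_alpha; the three
  identities are rearrangements of this. The integrability of P_alpha also comes from
  orthonormality: every product of two degree-2n forms is mu-integrable, in particular each
  x_i^(4n), and this forces mu to be finite.
*)
theory Submission
  imports Defs
begin

definition pos_homogeneous :: "nat \<Rightarrow> ('a::real_vector \<Rightarrow> real) \<Rightarrow> bool" where
  "pos_homogeneous k f \<longleftrightarrow> (\<forall>r>0. \<forall>x. f (r *\<^sub>R x) = r ^ k * f x)"

lemma pos_homogeneousD: "pos_homogeneous k f \<Longrightarrow> r > 0 \<Longrightarrow> f (r *\<^sub>R x) = r ^ k * f x"
  unfolding pos_homogeneous_def by blast

lemma pos_homogeneous_mult: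
  "pos_homogeneous k f \<Longrightarrow> pos_homogeneous m g \<Longrightarrow> pos_homogeneous (k + m) (\<lambda>x. f x * g x)"
  by (simp add: pos_homogeneous_def power_add)

lemma pos_homogeneous_uminus: "pos_homogeneous k f \<Longrightarrow> pos_homogeneous k (\<lambda>x. - f x)"
  by (simp add: pos_homogeneous_def)

lemma pos_homogeneous_zero:
  assumes "pos_homogeneous k f" "k > 0"
  shows "f 0 = 0"
proof -
  have "f 0 = 2 ^ k * f 0"
    using pos_homogeneousD[OF assms(1), of 2 0] by simp
  moreover have "(2::real) ^ k > 1"
    using assms(2) by (simp add: one_less_power)
  ultimately show ?thesis
    by (metis mult_cancel_right1 less_irrefl)
qed

lemma nn_integral_lborel_scaleR:
  fixes h :: "'a::euclidean_space \<Rightarrow> ennreal"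
  assumes [measurable]: "h \<in> borel_measurable borel" and "r > 0"
  shows "(\<integral>\<^sup>+x. h x \<partial>lborel) = ennreal (r ^ DIM('a)) * (\<integral>\<^sup>+x. h (r *\<^sub>R x) \<partial>lborel)"
  using \<open>r > 0\<close>
  by (subst lborel_affine[of r 0]) (simp_all add: nn_integral_density nn_integral_distr nn_integral_cmult)

lemma nn_integral_pos_homogeneous_exp_scale:
  fixes h g :: "'a::euclidean_space \<Rightarrow> real"
  assumes [measurable]: "h \<in> borel_measurable borel" "g \<in> borel_measurable borel"
    and h: "pos_homogeneous j h" and g: "pos_homogeneous m g" and "m > 0" "t > 0"
  shows "(\<integral>\<^sup>+x. ennreal (h x) * ennreal (exp (- t * g x)) \<partial>lborel)
     = ennreal (t powr (- real (j + DIM('a)) / real m)) *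
       (\<integral>\<^sup>+x. ennreal (h x) * ennreal (exp (- g x)) \<partial>lborel)"
proof -
  define r where "r = t powr (- 1 / real m)"
  have "r > 0"
    using \<open>t > 0\<close> by (simp add: r_def)
  have t_r: "t * r ^ m = 1"
    using \<open>t > 0\<close> \<open>m > 0\<close> by (simp add: r_def powr_realpow[symmetric] powr_powr powr_add[symmetric])
  have r_pow: "r ^ (j + DIM('a)) = t powr (- real (j + DIM('a)) / real m)"
    using \<open>t > 0\<close> by (simp add: r_def powr_realpow[symmetric] powr_powr) (simp add: diff_divide_distrib add_divide_distrib)
  have "(\<integral>\<^sup>+x. ennreal (h x) * ennreal (exp (- t * g x)) \<partial>lborel)
      = ennreal (r ^ DIM('a)) * (\<integral>\<^sup>+x. ennreal (h (r *\<^sub>R x)) * ennreal (exp (- t * g (r *\<^sub>R x))) \<partial>lborel)"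
    by (rule nn_integral_lborel_scaleR[OF _ \<open>r > 0\<close>]) measurable
  also have "(\<lambda>x. ennreal (h (r *\<^sub>R x)) * ennreal (exp (- t * g (r *\<^sub>R x))))
      = (\<lambda>x. ennreal (r ^ j) * (ennreal (h x) * ennreal (exp (- g x))))"
    using \<open>r > 0\<close> t_r
    by (simp add: pos_homogeneousD[OF h] pos_homogeneousD[OF g] ennreal_mult' mult.assoc[symmetric])
  also have "(\<integral>\<^sup>+x. ennreal (r ^ j) * (ennreal (h x) * ennreal (exp (- g x))) \<partial>lborel)
      = ennreal (r ^ j) * (\<integral>\<^sup>+x. ennreal (h x) * ennreal (exp (- g x)) \<partial>lborel)"
    by (rule nn_integral_cmult) measurable
  finally show ?thesis
    unfolding r_pow[symmetric] using \<open>r > 0\<close>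
    by (simp add: mult.assoc[symmetric] ennreal_mult[symmetric] power_add mult.commute)
qed

text \<open>Writing \<open>exp (- g x) = g x * (\<integral>t\<ge>1. exp (- t * g x))\<close> and exchanging the integrals, the scaling
  lemma leaves the factor \<open>\<integral>t\<ge>1. t powr (- (k + m + d) / m) = m / (k + d)\<close>.\<close>

lemma nn_integral_pos_homogeneous_mult_exp:
  fixes f g :: "'a::euclidean_space \<Rightarrow> real"
  assumes [measurable]: "f \<in> borel_measurable borel" "g \<in> borel_measurable borel"
    and f: "pos_homogeneous k f" and g: "pos_homogeneous m g" and "m > 0" and "f 0 = 0"
    and g_pos: "\<And>x. x \<noteq> 0 \<Longrightarrow> g x > 0"
  shows "(\<integral>\<^sup>+x. ennreal (f x * g x) * ennreal (exp (- g x)) \<partial>lborel)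
     = ennreal (real (k + DIM('a)) / real m) * (\<integral>\<^sup>+x. ennreal (f x) * ennreal (exp (- g x)) \<partial>lborel)"
proof -
  let ?G = "\<integral>\<^sup>+x. ennreal (f x * g x) * ennreal (exp (- g x)) \<partial>lborel"
  define e where "e = - real (k + m + DIM('a)) / real m"
  have "real (k + DIM('a)) > 0"
    by (metis DIM_positive add_gr_0 of_nat_0_less_iff)
  then have e_less: "e < -1" and e_tail: "- (1 / (e + 1)) = real m / real (k + DIM('a))"
    using \<open>m > 0\<close> by (simp_all add: e_def field_simps)
  have exp_tail: "ennreal (f x) * ennreal (exp (- g x))
      = (\<integral>\<^sup>+t. ennreal (f x * g x) * ennreal (exp (- t * g x)) * indicator {1..} t \<partial>lborel)" for x
  proof (cases "x = 0")
    case True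
    then show ?thesis by (simp add: \<open>f 0 = 0\<close>)
  next
    case False
    then have "g x > 0" by (rule g_pos)
    have "(\<integral>\<^sup>+t. ennreal (f x * g x) * ennreal (exp (- t * g x)) * indicator {1..} t \<partial>lborel)
        = ennreal (f x * g x) * (\<integral>\<^sup>+t. ennreal (exp (- g x * t)) * indicator {1..} t \<partial>lborel)"
      by (subst nn_integral_cmult[symmetric]) (simp_all add: mult_ac)
    also have "\<dots> = ennreal (f x * g x) * ennreal (exp (- g x) / g x)"
      using nn_integral_has_integral_lebesgue'[OF _ has_integral_exp_minus_to_infinity[OF \<open>g x > 0\<close>, of 1]]
      by simp
    also have "\<dots> = ennreal (f x) * ennreal (exp (- g x))"
      using \<open>g x > 0\<close> by (simp add: ennreal_mult''[symmetric])
    finally show ?thesis ..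
  qed
  have scaled: "(\<integral>\<^sup>+x. ennreal (f x * g x) * ennreal (exp (- t * g x)) * indicator {1..} t \<partial>lborel)
      = ennreal (t powr e) * indicator {1..} t * ?G" for t
  proof (cases "t \<ge> 1")
    case True
    then show ?thesis
      using nn_integral_pos_homogeneous_exp_scale[OF _ _ pos_homogeneous_mult[OF f g] g \<open>m > 0\<close>, of t]
      by (simp add: e_def add.assoc add.commute[of m])
  qed simp
  have "(\<integral>\<^sup>+x. ennreal (f x) * ennreal (exp (- g x)) \<partial>lborel)
      = (\<integral>\<^sup>+x. (\<integral>\<^sup>+t. ennreal (f x * g x) * ennreal (exp (- t * g x)) * indicator {1..} t \<partial>lborel) \<partial>lborel)"
    by (simp only: exp_tail)
  also have "\<dots> = (\<integral>\<^sup>+t. (\<integral>\<^sup>+x. ennreal (f x * g x) * ennreal (exp (- t * g x)) * indicator {1..} t \<partial>lborel) \<partial>lborel)"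
    by (rule lborel_pair.Fubini'[symmetric]) measurable
  also have "\<dots> = (\<integral>\<^sup>+t. ennreal (t powr e) * indicator {1..} t \<partial>lborel) * ?G"
    unfolding scaled by (rule nn_integral_multc) measurable
  also have "\<dots> = ennreal (real m / real (k + DIM('a))) * ?G"
    using nn_integral_has_integral_lebesgue'[OF _ has_integral_powr_to_inf[OF e_less, of 1]]
    by (simp add: e_tail)
  finally show ?thesis
    using \<open>m > 0\<close> \<open>real (k + DIM('a)) > 0\<close>
    by (simp add: mult.assoc[symmetric] ennreal_mult[symmetric] del: of_nat_add)
qed

lemma integral_pos_homogeneous_mult_exp_density:
  fixes f g :: "'a::euclidean_space \<Rightarrow> real"
  defines "\<mu> \<equiv> density lborel (\<lambda>x. ennreal (exp (- g x)))"
  assumes [measurable]: "f \<in> borel_measurable borel" "g \<in> borel_measurable borel"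
    and f: "pos_homogeneous k f" and g: "pos_homogeneous m g" and "m > 0" and "f 0 = 0"
    and g_pos: "\<And>x. x \<noteq> 0 \<Longrightarrow> g x > 0"
    and "integrable \<mu> (\<lambda>x. f x * g x)" "integrable \<mu> f"
  shows "(\<integral>x. f x * g x \<partial>\<mu>) = real (k + DIM('a)) / real m * (\<integral>x. f x \<partial>\<mu>)"
proof -
  let ?c = "real (k + DIM('a)) / real m"
  have nn: "(\<integral>\<^sup>+x. ennreal (h x * g x) \<partial>\<mu>) = ennreal ?c * (\<integral>\<^sup>+x. ennreal (h x) \<partial>\<mu>)"
    if [measurable]: "h \<in> borel_measurable borel" and "pos_homogeneous k h" "h 0 = 0" for h
    unfolding \<mu>_def
    using nn_integral_pos_homogeneous_mult_exp[OF that(1) _ that(2) g \<open>m > 0\<close> that(3) g_pos]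
    by (simp add: nn_integral_density mult.commute)
  show ?thesis
    unfolding real_lebesgue_integral_def[OF \<open>integrable \<mu> (\<lambda>x. f x * g x)\<close>]
      real_lebesgue_integral_def[OF \<open>integrable \<mu> f\<close>]
    using nn[of f] nn[of "\<lambda>x. - f x"] f pos_homogeneous_uminus[OF f] \<open>f 0 = 0\<close>
    by (simp add: enn2real_mult right_diff_distrib)
qed

lemma finite_multi_idx: "finite (multi_idx m :: ('d::finite \<Rightarrow> nat) set)"
proof (rule finite_subset)
  show "multi_idx m \<subseteq> (PiE UNIV (\<lambda>_. {..m}) :: ('d \<Rightarrow> nat) set)"
  proof
    fix \<alpha> :: "'d \<Rightarrow> nat"
    assume "\<alpha> \<in> multi_idx m"
    then have "\<alpha> i \<le> m" for i
      using member_le_sum[of i UNIV \<alpha>] by (simp add: multi_idx_def)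
    then show "\<alpha> \<in> PiE UNIV (\<lambda>_. {..m})"
      by auto
  qed
qed (simp add: finite_PiE)

lemma monom_scaleR:
  assumes "\<alpha> \<in> multi_idx m"
  shows "monom \<alpha> (r *\<^sub>R x) = r ^ m * monom \<alpha> x"
  using assms
  by (simp add: monom_def multi_idx_def power_mult_distrib prod.distrib power_sum[symmetric])

lemma pos_homogeneous_hom_form: "hom_form m f \<Longrightarrow> pos_homogeneous m f"
  by (auto simp: hom_form_def pos_homogeneous_def monom_scaleR sum_distrib_left mult_ac
           cong: sum.cong)

lemma continuous_on_hom_form:
  assumes "hom_form m (f :: real^'d::finite \<Rightarrow> real)"
  shows "continuous_on UNIV f"
proof -
  obtain c where "f = (\<lambda>x. \<Sum>\<alpha>\<in>(multi_idx m :: ('d \<Rightarrow> nat) set). c \<alpha> * (\<Prod>i\<in>UNIV. (x $ i) ^ \<alpha> i))"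
    using assms unfolding hom_form_def monom_def by blast
  then show ?thesis
    by (simp add: continuous_intros)
qed

lemma borel_measurable_hom_form:
  "hom_form m (f :: real^'d::finite \<Rightarrow> real) \<Longrightarrow> f \<in> borel_measurable borel"
  by (rule borel_measurable_continuous_onI[OF continuous_on_hom_form])

lemma hom_form_component_power: "hom_form m (\<lambda>x::real^'d::finite. (x $ i) ^ m)"
proof -
  define e :: "'d \<Rightarrow> nat" where "e = (\<lambda>j. if j = i then m else 0)"
  have "e \<in> multi_idx m"
    by (simp add: multi_idx_def e_def)
  then have "(\<Sum>\<alpha>\<in>multi_idx m. of_bool (\<alpha> = e) * monom \<alpha> x) = monom e x" for x :: "real^'d"
    by (simp add: sum.delta' finite_multi_idx)
  moreover have "monom e x = (x $ i) ^ m" for x :: "real^'d"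
    by (simp add: monom_def e_def if_distrib[of "power _"] prod.delta cong: if_cong)
  ultimately show ?thesis
    unfolding hom_form_def by metis
qed

lemma integral_hom_form_mult_exp_density:
  fixes f g :: "real^'d::finite \<Rightarrow> real"
  defines "\<mu> \<equiv> density lborel (\<lambda>x. ennreal (exp (- g x)))"
  assumes "hom_form k f" "hom_form m g" "k > 0" "m > 0"
    and "\<And>x. x \<noteq> 0 \<Longrightarrow> g x > 0"
    and "integrable \<mu> (\<lambda>x. f x * g x)" "integrable \<mu> f"
  shows "(\<integral>x. f x * g x \<partial>\<mu>) = real (k + CARD('d)) / real m * (\<integral>x. f x \<partial>\<mu>)"
proof -
  have "(\<integral>x. f x * g x \<partial>\<mu>) = real (k + DIM(real^'d)) / real m * (\<integral>x. f x \<partial>\<mu>)"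
    unfolding \<mu>_def
    by (rule integral_pos_homogeneous_mult_exp_density[OF borel_measurable_hom_form[OF assms(2)]
          borel_measurable_hom_form[OF assms(3)] pos_homogeneous_hom_form[OF assms(2)]
          pos_homogeneous_hom_form[OF assms(3)] \<open>m > 0\<close>
          pos_homogeneous_zero[OF pos_homogeneous_hom_form[OF assms(2)] \<open>k > 0\<close>]])
       (use assms(6-8) in \<open>simp_all add: \<mu>_def\<close>)
  then show ?thesis
    by simp
qed

lemma emeasure_density_exp_cbox_finite:
  fixes g :: "'a::euclidean_space \<Rightarrow> real"
  assumes [measurable]: "g \<in> borel_measurable borel" and "\<And>x. g x \<ge> 0"
  shows "emeasure (density lborel (\<lambda>x. ennreal (exp (- g x)))) (cbox a b) < \<infinity>"
proof -
  have "emeasure (density lborel (\<lambda>x. ennreal (exp (- g x)))) (cbox a b)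
      = (\<integral>\<^sup>+x. ennreal (exp (- g x)) * indicator (cbox a b) x \<partial>lborel)"
    by (rule emeasure_density) measurable
  also have "\<dots> \<le> (\<integral>\<^sup>+x. indicator (cbox a b) x \<partial>lborel)"
    by (intro nn_integral_mono) (auto simp: indicator_def assms(2))
  also have "\<dots> < \<infinity>"
    using emeasure_bounded_finite[OF bounded_cbox] by simp
  finally show ?thesis .
qed

lemma integrable_mult_of_square_integrable:
  fixes f h :: "'a \<Rightarrow> real"
  assumes [measurable]: "f \<in> borel_measurable M" "h \<in> borel_measurable M"
    and "integrable M (\<lambda>x. f x * f x)" "integrable M (\<lambda>x. h x * h x)"
  shows "integrable M (\<lambda>x. f x * h x)"
proof (rule Bochner_Integration.integrable_bound[OF Bochner_Integration.integrable_add[OF assms(3,4)]])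
  have "\<bar>a * b\<bar> \<le> a * a + b * b" for a b :: real
  proof -
    have "2 * \<bar>a * b\<bar> \<le> a * a + b * b"
      using sum_squares_bound[of "\<bar>a\<bar>" "\<bar>b\<bar>"] by (simp add: abs_mult power2_eq_square mult.assoc)
    then show ?thesis
      using abs_ge_zero[of "a * b"] by linarith
  qed
  then show "AE x in M. norm (f x * h x) \<le> norm (f x * f x + h x * h x)"
    by simp
qed simp

lemma integrable_orthonormal_products:
  fixes P :: "'i \<Rightarrow> 'a \<Rightarrow> real"
  assumes "\<And>\<alpha>. \<alpha> \<in> A \<Longrightarrow> P \<alpha> \<in> borel_measurable M"
    and "\<And>\<alpha> \<beta>. \<alpha> \<in> A \<Longrightarrow> \<beta> \<in> A \<Longrightarrow> (\<integral>x. P \<alpha> x * P \<beta> x \<partial>M) = (if \<alpha> = \<beta> then 1 else 0)"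
    and "\<alpha> \<in> A" "\<beta> \<in> A"
  shows "integrable M (\<lambda>x. P \<alpha> x * P \<beta> x)"
proof -
  have square: "integrable M (\<lambda>x. P \<gamma> x * P \<gamma> x)" if "\<gamma> \<in> A" for \<gamma>
  proof (rule ccontr)
    assume "\<not> integrable M (\<lambda>x. P \<gamma> x * P \<gamma> x)"
    then have "(\<integral>x. P \<gamma> x * P \<gamma> x \<partial>M) = 0"
      by (rule not_integrable_integral_eq)
    with assms(2)[OF that that] show False
      by simp
  qed
  show ?thesis
    using assms(1)[OF assms(3)] assms(1)[OF assms(4)] square[OF assms(3)] square[OF assms(4)]
    by (rule integrable_mult_of_square_integrable)
qed

lemma integral_orthonormal_coeff:
  fixes P :: "'i \<Rightarrow> 'a \<Rightarrow> real"
  assumes "finite A" "\<alpha> \<in> A"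
    and "\<And>\<beta> \<gamma>. \<beta> \<in> A \<Longrightarrow> \<gamma> \<in> A \<Longrightarrow> integrable M (\<lambda>x. P \<beta> x * P \<gamma> x)"
    and "\<And>\<beta> \<gamma>. \<beta> \<in> A \<Longrightarrow> \<gamma> \<in> A \<Longrightarrow> (\<integral>x. P \<beta> x * P \<gamma> x \<partial>M) = (if \<beta> = \<gamma> then 1 else 0)"
  shows "(\<integral>x. P \<alpha> x * (\<Sum>\<beta>\<in>A. a \<beta> * P \<beta> x) \<partial>M) = a \<alpha>"
proof -
  have "(\<integral>x. P \<alpha> x * (\<Sum>\<beta>\<in>A. a \<beta> * P \<beta> x) \<partial>M) = (\<integral>x. (\<Sum>\<beta>\<in>A. a \<beta> * (P \<alpha> x * P \<beta> x)) \<partial>M)"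
    by (simp add: sum_distrib_left mult_ac)
  also have "\<dots> = (\<Sum>\<beta>\<in>A. a \<beta> * (\<integral>x. P \<alpha> x * P \<beta> x \<partial>M))"
    using assms(2,3) by simp
  also have "\<dots> = a \<alpha>"
    using assms(1,2,4) by (simp add: if_distrib[of "\<lambda>c. _ * c"] sum.delta cong: if_cong)
  finally show ?thesis .
qed

lemma integrable_mult_sums:
  fixes P :: "'i \<Rightarrow> 'a \<Rightarrow> real"
  assumes "\<And>\<beta> \<gamma>. \<beta> \<in> A \<Longrightarrow> \<gamma> \<in> A \<Longrightarrow> integrable M (\<lambda>x. P \<beta> x * P \<gamma> x)"
  shows "integrable M (\<lambda>x. (\<Sum>\<beta>\<in>A. a \<beta> * P \<beta> x) * (\<Sum>\<gamma>\<in>A. b \<gamma> * P \<gamma> x))"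
proof -
  have "(\<lambda>x. (\<Sum>\<beta>\<in>A. a \<beta> * P \<beta> x) * (\<Sum>\<gamma>\<in>A. b \<gamma> * P \<gamma> x))
      = (\<lambda>x. \<Sum>\<beta>\<in>A. \<Sum>\<gamma>\<in>A. (a \<beta> * b \<gamma>) * (P \<beta> x * P \<gamma> x))"
    by (simp add: sum_product mult_ac)
  then show ?thesis
    using assms by (simp add: integrable_mult_right)
qed

lemma finite_measure_of_integrable_form_squares:
  fixes M :: "(real^'d::finite) measure"
  assumes sets_M: "sets M = sets borel"
    and cube: "emeasure M (cbox (\<chi> _. -1) (\<chi> _. 1)) < \<infinity>"
    and squares: "\<And>f. hom_form m f \<Longrightarrow> integrable M (\<lambda>x. f x * f x)"
  shows "finite_measure M"
proof -
  define S :: "(real^'d) set" where "S = cbox (\<chi> _. -1) (\<chi> _. 1)"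
  define h where "h x = indicator S x + (\<Sum>i\<in>UNIV. (x $ i) ^ m * (x $ i) ^ m)" for x :: "real^'d"
  have space_M: "space M = UNIV"
    using sets_eq_imp_space_eq[OF sets_M] by simp
  have "integrable M (indicator S :: _ \<Rightarrow> real)"
    using cube sets_M by (simp add: integrable_indicator_iff space_M S_def)
  moreover have "integrable M (\<lambda>x. \<Sum>i\<in>UNIV. (x $ i) ^ m * (x $ i) ^ m)"
    by (intro Bochner_Integration.integrable_sum squares hom_form_component_power)
  ultimately have h_int: "integrable M h"
    unfolding h_def by (rule Bochner_Integration.integrable_add)
  have h_ge: "1 \<le> h x" for x
  proof (cases "x \<in> S")
    case False
    then obtain i where "\<not> (-1 \<le> x $ i \<and> x $ i \<le> 1)"
      unfolding S_def mem_box_cart by auto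
    then have "1 \<le> \<bar>x $ i\<bar> ^ (m + m)"
      by (intro one_le_power) linarith
    then have "1 \<le> (x $ i) ^ m * (x $ i) ^ m"
      by (simp add: power_add[symmetric] power_even_abs)
    also have "\<dots> \<le> (\<Sum>i\<in>UNIV. (x $ i) ^ m * (x $ i) ^ m)"
      by (rule member_le_sum) simp_all
    finally show ?thesis
      using False by (simp add: h_def)
  qed (simp add: h_def sum_nonneg)
  have "integrable M (\<lambda>_. 1::real)"
  proof (rule Bochner_Integration.integrable_bound[OF h_int])
    show "AE x in M. norm (1::real) \<le> norm (h x)"
      using h_ge by (intro AE_I2) (metis abs_ge_self norm_one real_norm_def order_trans)
  qed simp
  then have "integrable M (indicator (space M) :: _ \<Rightarrow> real)"
    by (simp add: space_M)
  then have "emeasure M (space M) < \<infinity>"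
    by (simp add: integrable_indicator_iff)
  then show ?thesis
    by (intro finite_measureI) simp
qed

lemma integrable_orthonormal_form_basis:
  fixes M :: "(real^'d::finite) measure" and P :: "'i \<Rightarrow> real^'d \<Rightarrow> real"
  assumes sets_M: "sets M = sets borel"
    and cube: "emeasure M (cbox (\<chi> _. -1) (\<chi> _. 1)) < \<infinity>"
    and P_meas: "\<And>\<alpha>. \<alpha> \<in> A \<Longrightarrow> P \<alpha> \<in> borel_measurable M"
    and P_span: "\<And>f. hom_form m f \<Longrightarrow> \<exists>a. \<forall>x. f x = (\<Sum>\<alpha>\<in>A. a \<alpha> * P \<alpha> x)"
    and P_orthonormal: "\<And>\<alpha> \<beta>. \<alpha> \<in> A \<Longrightarrow> \<beta> \<in> A \<Longrightarrow>
          (\<integral>x. P \<alpha> x * P \<beta> x \<partial>M) = (if \<alpha> = \<beta> then 1 else 0)"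
    and "\<alpha> \<in> A"
  shows "integrable M (P \<alpha>)"
proof -
  have PP_int: "integrable M (\<lambda>x. P \<beta> x * P \<gamma> x)" if "\<beta> \<in> A" "\<gamma> \<in> A" for \<beta> \<gamma>
    using P_meas P_orthonormal that by (rule integrable_orthonormal_products)
  have "integrable M (\<lambda>x. f x * f x)" if f_form: "hom_form m f" for f
  proof -
    obtain a where "\<And>x. f x = (\<Sum>\<alpha>\<in>A. a \<alpha> * P \<alpha> x)"
      using P_span[OF f_form] by blast
    then show ?thesis
      using integrable_mult_sums[of A M P a a] PP_int by simp
  qed
  then interpret finite_measure M
    by (rule finite_measure_of_integrable_form_squares[OF sets_M cube])
  show ?thesis
    using P_meas[OF \<open>\<alpha> \<in> A\<close>]
    by (rule square_integrable_imp_integrable) (use PP_int[OF \<open>\<alpha> \<in> A\<close> \<open>\<alpha> \<in> A\<close>] in \<open>simp add: power2_eq_square\<close>)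
qed

lemma orthonormal_coeff_hom_form_exp_density:
  fixes g :: "real^'d::finite \<Rightarrow> real" and P :: "'i \<Rightarrow> real^'d \<Rightarrow> real"
  defines "\<mu> \<equiv> density lborel (\<lambda>x. ennreal (exp (- g x)))"
  assumes "finite A" "\<alpha> \<in> A" "k > 0" "m > 0"
    and g_form: "hom_form m g" and g_pos: "\<And>x. x \<noteq> 0 \<Longrightarrow> g x > 0"
    and P_form: "hom_form k (P \<alpha>)"
    and PP_int: "\<And>\<beta> \<gamma>. \<beta> \<in> A \<Longrightarrow> \<gamma> \<in> A \<Longrightarrow> integrable \<mu> (\<lambda>x. P \<beta> x * P \<gamma> x)"
    and P_orthonormal: "\<And>\<beta> \<gamma>. \<beta> \<in> A \<Longrightarrow> \<gamma> \<in> A \<Longrightarrow>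
          (\<integral>x. P \<beta> x * P \<gamma> x \<partial>\<mu>) = (if \<beta> = \<gamma> then 1 else 0)"
    and P_int: "integrable \<mu> (P \<alpha>)"
    and g_coeffs: "\<And>x. g x = (\<Sum>\<beta>\<in>A. a \<beta> * P \<beta> x)"
  shows "a \<alpha> = real (k + CARD('d)) / real m * (\<integral>x. P \<alpha> x \<partial>\<mu>)"
proof -
  have "(\<lambda>x. P \<alpha> x * g x) = (\<lambda>x. \<Sum>\<beta>\<in>A. a \<beta> * (P \<alpha> x * P \<beta> x))"
    by (simp add: g_coeffs sum_distrib_left mult.left_commute)
  then have Pg_int: "integrable \<mu> (\<lambda>x. P \<alpha> x * g x)"
    by (simp add: PP_int \<open>\<alpha> \<in> A\<close>)
  have "a \<alpha> = (\<integral>x. P \<alpha> x * (\<Sum>\<beta>\<in>A. a \<beta> * P \<beta> x) \<partial>\<mu>)"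
    using \<open>finite A\<close> \<open>\<alpha> \<in> A\<close> PP_int P_orthonormal by (rule integral_orthonormal_coeff[symmetric])
  also have "\<dots> = (\<integral>x. P \<alpha> x * g x \<partial>\<mu>)"
    by (simp only: g_coeffs)
  also have "\<dots> = real (k + CARD('d)) / real m * (\<integral>x. P \<alpha> x \<partial>\<mu>)"
    unfolding \<mu>_def
    by (rule integral_hom_form_mult_exp_density[OF P_form g_form \<open>k > 0\<close> \<open>m > 0\<close> g_pos])
       (use Pg_int P_int in \<open>simp_all add: \<mu>_def\<close>)
  finally show ?thesis .
qed

theorem theorem2p2:
  fixes n :: nat
    and g :: "real^'d::finite \<Rightarrow> real"
    and P :: "('d \<Rightarrow> nat) \<Rightarrow> real^'d \<Rightarrow> real"
    and gt :: "('d \<Rightarrow> nat) \<Rightarrow> real"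
  defines "A \<equiv> (multi_idx (2 * n) :: ('d \<Rightarrow> nat) set)"
    and "\<mu> \<equiv> density lborel (\<lambda>x. ennreal (exp (- g x)))"
    and "c \<equiv> 1 + real CARD('d) / (2 * real n)"
  assumes n_pos: "n \<ge> 1"
    and g_form: "hom_form (2 * n) g"
    and g_nonneg: "\<And>x. g x \<ge> 0"
    and g_zero: "\<And>x. g x = 0 \<Longrightarrow> x = 0"
    and P_form: "\<And>\<alpha>. \<alpha> \<in> A \<Longrightarrow> hom_form (2 * n) (P \<alpha>)"
    and P_span: "\<And>f. hom_form (2 * n) f \<Longrightarrow> \<exists>a. \<forall>x. f x = (\<Sum>\<alpha>\<in>A. a \<alpha> * P \<alpha> x)"
    and P_orthonormal: "\<And>\<alpha> \<beta>. \<alpha> \<in> A \<Longrightarrow> \<beta> \<in> A \<Longrightarrow>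
          (\<integral>x. P \<alpha> x * P \<beta> x \<partial>\<mu>) = (if \<alpha> = \<beta> then 1 else 0)"
    and gt_coeffs: "\<And>x. g x = (\<Sum>\<alpha>\<in>A. gt \<alpha> * P \<alpha> x)"
  shows "(\<forall>\<alpha>\<in>A. gt \<alpha> = c * (\<integral>x. P \<alpha> x \<partial>\<mu>)
            \<and> gt \<alpha> = c * (\<integral>x. P \<alpha> x * exp (- (\<Sum>\<beta>\<in>A. P \<beta> x * gt \<beta>)) \<partial>lborel))
       \<and> (\<forall>x. g x = c * (\<Sum>\<alpha>\<in>A. P \<alpha> x * (\<integral>y. P \<alpha> y \<partial>\<mu>))
            \<and> g x = c * (\<integral>y. (\<Sum>\<alpha>\<in>A. P \<alpha> x * P \<alpha> y) \<partial>\<mu>))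
       \<and> (\<forall>\<alpha>\<in>A. (\<integral>x. P \<alpha> x \<partial>\<mu>) =
            (\<integral>x. P \<alpha> x * exp (- (c * (\<Sum>\<beta>\<in>A. P \<beta> x * (\<integral>y. P \<beta> y \<partial>\<mu>)))) \<partial>lborel))"
proof -
  have "finite A" "2 * n > 0"
    using n_pos by (simp_all add: A_def finite_multi_idx)
  have g_meas [measurable]: "g \<in> borel_measurable borel"
    using g_form by (rule borel_measurable_hom_form)
  have g_pos: "g x > 0" if "x \<noteq> 0" for x
    using g_nonneg[of x] g_zero[of x] that by linarith
  have P_meas: "P \<alpha> \<in> borel_measurable \<mu>" if "\<alpha> \<in> A" for \<alpha>
    using borel_measurable_hom_form[OF P_form[OF that]] by (simp add: \<mu>_def)
  have PP_int: "integrable \<mu> (\<lambda>x. P \<alpha> x * P \<beta> x)" if "\<alpha> \<in> A" "\<beta> \<in> A" for \<alpha> \<beta>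
    using P_meas P_orthonormal that by (rule integrable_orthonormal_products)
  have P_int: "integrable \<mu> (P \<alpha>)" if "\<alpha> \<in> A" for \<alpha>
    by (rule integrable_orthonormal_form_basis[OF _ emeasure_density_exp_cbox_finite[OF g_meas g_nonneg,
          folded \<mu>_def] P_meas P_span P_orthonormal that]) (simp add: \<mu>_def)
  have gt: "gt \<alpha> = c * (\<integral>x. P \<alpha> x \<partial>\<mu>)" if "\<alpha> \<in> A" for \<alpha>
    using orthonormal_coeff_hom_form_exp_density[OF \<open>finite A\<close> that \<open>2 * n > 0\<close> \<open>2 * n > 0\<close>
        g_form g_pos P_form[OF that] PP_int[unfolded \<mu>_def] P_orthonormal[unfolded \<mu>_def]
        P_int[OF that, unfolded \<mu>_def] gt_coeffs]
    unfolding \<mu>_def[symmetric] c_def using \<open>2 * n > 0\<close> by (simp add: field_simps)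
  have density_eq: "(\<integral>x. P \<alpha> x \<partial>\<mu>) = (\<integral>x. P \<alpha> x * exp (- g x) \<partial>lborel)" if "\<alpha> \<in> A" for \<alpha>
    using borel_measurable_hom_form[OF P_form[OF that]]
    unfolding \<mu>_def by (subst integral_density) (simp_all add: mult.commute)
  have g_expansion: "g x = c * (\<Sum>\<alpha>\<in>A. P \<alpha> x * (\<integral>y. P \<alpha> y \<partial>\<mu>))" for x
    unfolding gt_coeffs sum_distrib_left by (rule sum.cong) (simp_all add: gt mult_ac)
  have kernel: "(\<integral>y. (\<Sum>\<alpha>\<in>A. P \<alpha> x * P \<alpha> y) \<partial>\<mu>) = (\<Sum>\<alpha>\<in>A. P \<alpha> x * (\<integral>y. P \<alpha> y \<partial>\<mu>))" for x
    by (simp add: P_int)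
  have g_sum: "(\<Sum>\<beta>\<in>A. P \<beta> x * gt \<beta>) = g x" for x
    by (simp add: gt_coeffs mult.commute)
  show ?thesis
    by (intro conjI ballI allI)
       (simp_all only: gt density_eq g_sum kernel g_expansion[symmetric])
qed

end
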